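(* Let $K=\mathbb{R}$ and assume $\tau_{(i)}>0$, $\eta_{(i)}>-1$, $\eta_{(i)}\neq0$ for all $i\in\Omega$. For $X\subseteq\Omega$ and $D,A\in\mathcal{I}^{\mathbf{c}}(X)$ with $A\subsetneqq D$, we have $\pi(X,D)\neq\pi(X,A)$ and $\pi(X,D)\curlyeqprec\pi(X,A)$.
   Context: $\Omega$ is a finite set and $\mathbf{P}=(\Omega,\preccurlyeq_{\mathbf{P}})$ a poset. For $Y\subseteq\Omega$: $\max(Y)$ is the set of maximal elements of $Y$ w.r.t. $\preccurlyeq_{\mathbf{P}}$; $\mathcal{I}(Y)$ is the set of down-closed subsets of $Y$ with the induced order; $\mathcal{I}^{\mathbf{c}}(Y)$ is the set of up-closed subsets of $Y$. $\tau,\eta\in\mathbb{R}^{\Omega}$. For $D,I\subseteq\Omega$, $\varphi(D,I)=(-1)^{|I\cap D|}\big(\prod_{i\in I-\max(I)}\tau_{(i)}\big)\big(\prod_{i\in\max(I)-D}\eta_{(i)}\big)$ if $I\cap D\subseteq\max(I)$, and $0$ otherwise; for $D\subseteq Y\subseteq\Omega$, $\pi(Y,D)=\sum_{I\in\mathcal{I}(Y)}\varphi(D,I)x^{|I|}\in\mathbb{R}[x]$. For $f\in\mathbb{R}[x]$, $f_{(k)}$ is the coefficient of $x^k$. The total order $\curlyeqprec$ on $\mathbb{R}[x]$: $f\curlyeqprec g$ iff (i) $f=g$, or (ii) $\deg f\leqslant\deg g-1$, or (iii) $\deg f=\deg g$ and there exists $k\in\mathbb{N}$ with $f_{(k)}<g_{(k)}$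 and $f\equiv g\pmod{x^k}$. *)

theory Defs
  imports "HOL-Computational_Algebra.Polynomial"
begin

text \<open>The poset is given by a relation r (pairs (a,b) meaning a precedes-or-equals b).\<close>

definition maxs :: "('a \<times> 'a) set \<Rightarrow> 'a set \<Rightarrow> 'a set" where
  "maxs r Y = {y \<in> Y. \<forall>z\<in>Y. (y, z) \<in> r \<longrightarrow> z = y}"

definition downsets :: "('a \<times> 'a) set \<Rightarrow> 'a set \<Rightarrow> 'a set set" where
  "downsets r Y = {I. I \<subseteq> Y \<and> (\<forall>i\<in>I. \<forall>j\<in>Y. (j, i) \<in> r \<longrightarrow> j \<in> I)}"

definition upsets :: "('a \<times> 'a) set \<Rightarrow> 'a set \<Rightarrow> 'a set set" where
  "upsets r Y = {I. I \<subseteq> Y \<and> (\<forall>i\<in>I. \<forall>j\<in>Y. (i, j) \<in> r \<longrightarrow> j \<in> I)}"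

definition phi :: "('a \<times> 'a) set \<Rightarrow> ('a \<Rightarrow> real) \<Rightarrow> ('a \<Rightarrow> real) \<Rightarrow> 'a set \<Rightarrow> 'a set \<Rightarrow> real" where
  "phi r \<tau> \<eta> D I =
     (if I \<inter> D \<subseteq> maxs r I
      then (-1) ^ card (I \<inter> D) * (\<Prod>i\<in>I - maxs r I. \<tau> i) * (\<Prod>i\<in>maxs r I - D. \<eta> i)
      else 0)"

definition piP :: "('a \<times> 'a) set \<Rightarrow> ('a \<Rightarrow> real) \<Rightarrow> ('a \<Rightarrow> real) \<Rightarrow> 'a set \<Rightarrow> 'a set \<Rightarrow> real poly" where
  "piP r \<tau> \<eta> Y D = (\<Sum>I\<in>downsets r Y. monom (phi r \<tau> \<eta> D I) (card I))"

text \<open>Degree condition deg f \<le> deg g - 1 is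
  rendered as degree f < degree g (all polynomials compared in the theorem are nonzero,
  having constant coefficient 1).\<close>
definition poly_prec :: "real poly \<Rightarrow> real poly \<Rightarrow> bool" where
  "poly_prec f g \<longleftrightarrow>
     f = g \<or> degree f < degree g \<or>
     (degree f = degree g \<and>
      (\<exists>k::nat. coeff f k < coeff g k \<and> (\<forall>j<k. coeff f j = coeff g j)))"

end

theory Submission
  imports Defs
begin

text \<open>Write f = \<pi>(X,D) and g = \<pi>(X,A). A down-set I contributes the same term to f and g
  unless I meets D - A. A down-set of least cardinality k meeting D - A is the principal
  down-set of a single d \<in> D - A and is disjoint from A; its weight is -\<Prod>\<tau> in f but
  (\<Prod>\<tau>) \<eta>(d) in g, which is larger since \<eta>(d) > -1. Hence f and g first differ at the
  coefficient of x^k, where f is smaller. For the degrees: \<phi>(D,I) \<noteq> 0 forces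
  I \<subseteq> (X - D) \<union> min D, a down-set whose own weight is nonzero, so
  deg f = |(X - D) \<union> min D| \<le> |(X - A) \<union> min A| = deg g.\<close>

definition mins :: "('a \<times> 'a) set \<Rightarrow> 'a set \<Rightarrow> 'a set" where
  "mins r Y = {y \<in> Y. \<forall>z\<in>Y. (z, y) \<in> r \<longrightarrow> z = y}"

definition top_downset :: "('a \<times> 'a) set \<Rightarrow> 'a set \<Rightarrow> 'a set \<Rightarrow> 'a set" where
  "top_downset r X D = (X - D) \<union> mins r D"

definition principal_downset :: "('a \<times> 'a) set \<Rightarrow> 'a set \<Rightarrow> 'a \<Rightarrow> 'a set" where
  "principal_downset r X d = {j \<in> X. (j, d) \<in> r}"

lemma downsets_subset: "I \<in> downsets r X \<Longrightarrow> I \<subseteq> X"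
  by (simp add: downsets_def)

lemma upsets_subset: "A \<in> upsets r X \<Longrightarrow> A \<subseteq> X"
  by (simp add: upsets_def)

lemma finite_downsets: "finite X \<Longrightarrow> finite (downsets r X)"
  by (rule finite_subset[of _ "Pow X"]) (auto simp: downsets_def)

lemma coeff_piP:
  assumes "finite X"
  shows "coeff (piP r \<tau> \<eta> X D) k = (\<Sum>I\<in>{I\<in>downsets r X. card I = k}. phi r \<tau> \<eta> D I)"
proof -
  have "coeff (piP r \<tau> \<eta> X D) k = (\<Sum>I\<in>downsets r X. if card I = k then phi r \<tau> \<eta> D I else 0)"
    unfolding piP_def by (simp add: coeff_sum coeff_monom)
  also have "\<dots> = (\<Sum>I\<in>{I\<in>downsets r X. card I = k}. phi r \<tau> \<eta> D I)"
    using finite_downsets[OF assms] by (simp add: sum.inter_filter)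
  finally show ?thesis .
qed

lemma phi_eq_if_disjoint:
  assumes "A \<subseteq> D" "I \<inter> (D - A) = {}"
  shows "phi r \<tau> \<eta> D I = phi r \<tau> \<eta> A I"
proof -
  have "I \<inter> D = I \<inter> A" and "maxs r I - D = maxs r I - A"
    using assms unfolding maxs_def by auto
  then show ?thesis unfolding phi_def by simp
qed

lemma principal_downset_in_downsets:
  "trans r \<Longrightarrow> principal_downset r X d \<in> downsets r X"
  unfolding principal_downset_def downsets_def by (auto dest: transD)

lemma maxs_principal_downset:
  assumes "d \<in> X" "(d, d) \<in> r" "antisym r"
  shows "maxs r (principal_downset r X d) = {d}"
  using assms unfolding maxs_def principal_downset_def antisym_def by auto

lemma minimal_downset_eq_principal:
  assumes "finite X" "\<forall>x\<in>X. (x, x) \<in> r" "trans r"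
    and I: "I \<in> downsets r X" "d \<in> I \<inter> E"
    and minimal: "\<And>J. J \<in> downsets r X \<Longrightarrow> J \<inter> E \<noteq> {} \<Longrightarrow> card I \<le> card J"
  shows "I = principal_downset r X d"
proof (rule card_seteq[symmetric])
  have IX: "I \<subseteq> X" using I(1) by (rule downsets_subset)
  then show "finite I" using \<open>finite X\<close> by (rule finite_subset)
  have "d \<in> principal_downset r X d \<inter> E"
    using assms(2) I(2) IX by (auto simp: principal_downset_def)
  then show "card I \<le> card (principal_downset r X d)"
    by (intro minimal principal_downset_in_downsets[OF \<open>trans r\<close>]) blast
  show "principal_downset r X d \<subseteq> I"
    using I unfolding principal_downset_def downsets_def by blast
qed

lemma phi_less_on_minimal_downset:
  assumes "finite X" and refl: "\<forall>x\<in>X. (x, x) \<in> r" and "trans r" "antisym r"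
    and tau: "\<forall>i\<in>X. \<tau> i > 0" and eta: "\<forall>i\<in>X. \<eta> i > -1"
    and A: "A \<in> upsets r X" and "A \<subseteq> D"
    and I: "I \<in> downsets r X" "I \<inter> (D - A) \<noteq> {}"
    and minimal: "\<And>J. J \<in> downsets r X \<Longrightarrow> J \<inter> (D - A) \<noteq> {} \<Longrightarrow> card I \<le> card J"
  shows "phi r \<tau> \<eta> D I < phi r \<tau> \<eta> A I"
proof -
  have principal: "I = principal_downset r X j" if "j \<in> I \<inter> (D - A)" for j
    using minimal_downset_eq_principal[OF assms(1-3) I(1) that minimal] .
  obtain d where d: "d \<in> I \<inter> (D - A)" using I(2) by blast
  have IX: "I \<subseteq> X" using I(1) downsets_subset by blast
  then have "d \<in> X" using d by blast
  have below_d: "(j, d) \<in> r" if "j \<in> I" for j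
    using that principal[OF d] by (simp add: principal_downset_def)
  have IA: "I \<inter> A = {}"
    using A d below_d \<open>d \<in> X\<close> unfolding upsets_def by blast
  have ID: "I \<inter> D = {d}"
  proof (intro equalityI subsetI)
    fix j assume j: "j \<in> I \<inter> D"
    then have "(d, j) \<in> r"
      using IA principal[of j] d by (auto simp: principal_downset_def)
    with below_d j \<open>antisym r\<close> show "j \<in> {d}" by (auto dest: antisymD)
  qed (use d in auto)
  have maxs_I: "maxs r I = {d}"
    using principal[OF d] maxs_principal_downset[OF \<open>d \<in> X\<close>] refl \<open>d \<in> X\<close> \<open>antisym r\<close>
    by simp
  define T where "T = (\<Prod>i\<in>I - {d}. \<tau> i)"
  have "T > 0" unfolding T_def using IX tau by (intro prod_pos) auto
  have "phi r \<tau> \<eta> D I = - T"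
    unfolding phi_def ID maxs_I T_def using d by simp
  moreover have "phi r \<tau> \<eta> A I = T * \<eta> d"
    unfolding phi_def IA maxs_I T_def using d by (simp add: Diff_triv)
  moreover have "0 < T * (\<eta> d + 1)"
    using \<open>T > 0\<close> eta \<open>d \<in> X\<close> by (intro mult_pos_pos) auto
  ultimately show ?thesis by (simp add: algebra_simps)
qed

lemma coeff_piP_lex_less:
  assumes "finite X" "\<forall>x\<in>X. (x, x) \<in> r" "trans r" "antisym r"
    and "\<forall>i\<in>X. \<tau> i > 0" "\<forall>i\<in>X. \<eta> i > -1"
    and A: "A \<in> upsets r X" and "A \<subset> D" "D \<subseteq> X"
  shows "\<exists>k. coeff (piP r \<tau> \<eta> X D) k < coeff (piP r \<tau> \<eta> X A) k \<and>
    (\<forall>j<k. coeff (piP r \<tau> \<eta> X D) j = coeff (piP r \<tau> \<eta> X A) j)"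
proof -
  let ?meets = "\<lambda>I. I \<in> downsets r X \<and> I \<inter> (D - A) \<noteq> {}"
  obtain d where d: "d \<in> D - A" using \<open>A \<subset> D\<close> by blast
  moreover have "(d, d) \<in> r" using d assms(2,9) by blast
  ultimately have "?meets (principal_downset r X d)"
    using assms(3,9) principal_downset_in_downsets by (auto simp: principal_downset_def)
  then obtain I0 where I0: "?meets I0" and minimal: "\<And>J. ?meets J \<Longrightarrow> card I0 \<le> card J"
    using ex_has_least_nat[of ?meets _ card] by blast
  have same: "phi r \<tau> \<eta> D I = phi r \<tau> \<eta> A I" if "I \<in> downsets r X" "\<not> ?meets I" for I
    using that \<open>A \<subset> D\<close> by (intro phi_eq_if_disjoint) auto
  have less: "phi r \<tau> \<eta> D I < phi r \<tau> \<eta> A I"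
    if I: "?meets I" "card I = card I0" for I
  proof (rule phi_less_on_minimal_downset[OF assms(1-7) psubset_imp_subset[OF assms(8)]])
    show "I \<in> downsets r X" "I \<inter> (D - A) \<noteq> {}" using I(1) by auto
    fix J assume "J \<in> downsets r X" "J \<inter> (D - A) \<noteq> {}"
    then show "card I \<le> card J" using minimal I(2) by simp
  qed
  have "coeff (piP r \<tau> \<eta> X D) (card I0) < coeff (piP r \<tau> \<eta> X A) (card I0)"
    unfolding coeff_piP[OF \<open>finite X\<close>]
  proof (rule sum_strict_mono_ex1)
    show "finite {I \<in> downsets r X. card I = card I0}"
      using finite_downsets[OF \<open>finite X\<close>] by simp
    show "\<forall>I\<in>{I \<in> downsets r X. card I = card I0}. phi r \<tau> \<eta> D I \<le> phi r \<tau> \<eta> A I"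
    proof
      fix I assume "I \<in> {I \<in> downsets r X. card I = card I0}"
      then show "phi r \<tau> \<eta> D I \<le> phi r \<tau> \<eta> A I"
        by (cases "?meets I") (simp_all add: same less less_imp_le)
    qed
    show "\<exists>I\<in>{I \<in> downsets r X. card I = card I0}. phi r \<tau> \<eta> D I < phi r \<tau> \<eta> A I"
      using I0 less[OF I0 refl] by blast
  qed
  moreover have "coeff (piP r \<tau> \<eta> X D) j = coeff (piP r \<tau> \<eta> X A) j" if "j < card I0" for j
    unfolding coeff_piP[OF \<open>finite X\<close>]
  proof (rule sum.cong[OF refl])
    fix I assume "I \<in> {I \<in> downsets r X. card I = j}"
    with that minimal[of I] show "phi r \<tau> \<eta> D I = phi r \<tau> \<eta> A I"
      by (intro same) auto
  qed
  ultimately show ?thesis by blast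
qed

lemma phi_nonzero_imp_subset_top_downset:
  assumes I: "I \<in> downsets r X" and "D \<subseteq> X" and "phi r \<tau> \<eta> D I \<noteq> 0"
  shows "I \<subseteq> top_downset r X D"
proof
  fix i assume "i \<in> I"
  have "I \<inter> D \<subseteq> maxs r I" using assms(3) by (auto simp: phi_def split: if_splits)
  moreover have "z \<in> I" if "z \<in> D" "(z, i) \<in> r" for z
    using I \<open>i \<in> I\<close> that \<open>D \<subseteq> X\<close> by (auto simp: downsets_def)
  ultimately show "i \<in> top_downset r X D"
    using \<open>i \<in> I\<close> downsets_subset[OF I] unfolding top_downset_def mins_def maxs_def by blast
qed

lemma top_downset_in_downsets:
  "A \<in> upsets r X \<Longrightarrow> top_downset r X A \<in> downsets r X"
  unfolding top_downset_def downsets_def upsets_def mins_def by blast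

lemma phi_top_downset_nonzero:
  assumes A: "A \<in> upsets r X" and "finite X"
    and tau: "\<forall>i\<in>X. \<tau> i \<noteq> 0" and eta: "\<forall>i\<in>X. \<eta> i \<noteq> 0"
  shows "phi r \<tau> \<eta> A (top_downset r X A) \<noteq> 0"
proof -
  let ?J = "top_downset r X A"
  have JX: "?J \<subseteq> X" using downsets_subset top_downset_in_downsets[OF A] by blast
  have "finite ?J" using JX \<open>finite X\<close> finite_subset by blast
  have "?J \<inter> A \<subseteq> maxs r ?J"
    using A unfolding top_downset_def maxs_def mins_def upsets_def by blast
  moreover have "(\<Prod>i\<in>?J - maxs r ?J. \<tau> i) \<noteq> 0"
    using \<open>finite ?J\<close> JX tau by (simp add: prod_zero_iff subset_iff)
  moreover have "(\<Prod>i\<in>maxs r ?J - A. \<eta> i) \<noteq> 0"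
    using \<open>finite ?J\<close> JX eta by (simp add: prod_zero_iff maxs_def subset_iff)
  ultimately show ?thesis unfolding phi_def by simp
qed

lemma degree_piP:
  assumes "finite X" and A: "A \<in> upsets r X"
    and "\<forall>i\<in>X. \<tau> i \<noteq> 0" "\<forall>i\<in>X. \<eta> i \<noteq> 0"
  shows "degree (piP r \<tau> \<eta> X A) = card (top_downset r X A)"
proof (rule antisym)
  let ?J = "top_downset r X A"
  have "finite ?J" using A \<open>finite X\<close> top_downset_in_downsets downsets_subset finite_subset by metis
  have support: "I \<subseteq> ?J" if "I \<in> downsets r X" "phi r \<tau> \<eta> A I \<noteq> 0" for I
    by (rule phi_nonzero_imp_subset_top_downset[OF that(1) upsets_subset[OF A] that(2)])
  show "degree (piP r \<tau> \<eta> X A) \<le> card ?J"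
  proof (rule degree_le, intro allI impI)
    fix k assume "card ?J < k"
    then have "phi r \<tau> \<eta> A I = 0" if "I \<in> downsets r X" "card I = k" for I
      using that support card_mono[OF \<open>finite ?J\<close>] \<open>card ?J < k\<close> by (meson not_le)
    then show "coeff (piP r \<tau> \<eta> X A) k = 0"
      unfolding coeff_piP[OF \<open>finite X\<close>] by simp
  qed
  have "coeff (piP r \<tau> \<eta> X A) (card ?J) = (\<Sum>I\<in>{?J}. phi r \<tau> \<eta> A I)"
    unfolding coeff_piP[OF \<open>finite X\<close>]
  proof (rule sum.mono_neutral_right)
    show "finite {I \<in> downsets r X. card I = card ?J}"
      using finite_downsets[OF \<open>finite X\<close>] by simp
    show "{?J} \<subseteq> {I \<in> downsets r X. card I = card ?J}"
      using top_downset_in_downsets[OF A] by simp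
    show "\<forall>I\<in>{I \<in> downsets r X. card I = card ?J} - {?J}. phi r \<tau> \<eta> A I = 0"
      using support card_subset_eq[OF \<open>finite ?J\<close>]
      by (metis (mono_tags, lifting) Diff_iff mem_Collect_eq singletonI)
  qed
  also have "\<dots> \<noteq> 0" using phi_top_downset_nonzero[OF A assms(1,3,4)] by simp
  finally show "card ?J \<le> degree (piP r \<tau> \<eta> X A)" by (rule le_degree)
qed

lemma card_top_downset_antimono:
  assumes "finite X" "A \<subseteq> D" "D \<subseteq> X"
  shows "card (top_downset r X D) \<le> card (top_downset r X A)"
proof (rule card_mono)
  show "finite (top_downset r X A)"
    using assms by (auto simp: top_downset_def mins_def intro: finite_subset)
  show "top_downset r X D \<subseteq> top_downset r X A"
    using \<open>A \<subseteq> D\<close> \<open>D \<subseteq> X\<close> unfolding top_downset_def mins_def by auto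
qed

theorem theorem3p4:
  fixes \<Omega> :: "'a set" and r :: "('a \<times> 'a) set"
    and \<tau> \<eta> :: "'a \<Rightarrow> real" and X D A :: "'a set"
  assumes "finite \<Omega>" and "partial_order_on \<Omega> r"
    and "\<forall>i\<in>\<Omega>. \<tau> i > 0" and "\<forall>i\<in>\<Omega>. \<eta> i > -1" and "\<forall>i\<in>\<Omega>. \<eta> i \<noteq> 0"
    and "X \<subseteq> \<Omega>" and "D \<in> upsets r X" and "A \<in> upsets r X" and "A \<subset> D"
  shows "piP r \<tau> \<eta> X D \<noteq> piP r \<tau> \<eta> X A \<and> poly_prec (piP r \<tau> \<eta> X D) (piP r \<tau> \<eta> X A)"
proof -
  let ?f = "piP r \<tau> \<eta> X D" and ?g = "piP r \<tau> \<eta> X A"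
  have "finite X" using assms(1,6) finite_subset by blast
  have "\<forall>x\<in>X. (x, x) \<in> r" "trans r" "antisym r"
    using assms(2,6) unfolding partial_order_on_def preorder_on_def refl_on_def by auto
  moreover have "\<forall>i\<in>X. \<tau> i > 0" "\<forall>i\<in>X. \<eta> i > -1"
    using assms(3,4,6) by auto
  moreover have "D \<subseteq> X" using assms(7) by (rule upsets_subset)
  ultimately obtain k where less: "coeff ?f k < coeff ?g k" and agree: "\<forall>j<k. coeff ?f j = coeff ?g j"
    using coeff_piP_lex_less[OF \<open>finite X\<close>] assms(8,9) by blast
  have "\<forall>i\<in>X. \<tau> i \<noteq> 0" "\<forall>i\<in>X. \<eta> i \<noteq> 0"
    using assms(3,5,6) by fastforce+
  then have "degree ?f = card (top_downset r X D)" "degree ?g = card (top_downset r X A)"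
    using degree_piP[OF \<open>finite X\<close>] assms(7,8) by blast+
  then have "degree ?f \<le> degree ?g"
    using card_top_downset_antimono[OF \<open>finite X\<close>] \<open>A \<subset> D\<close> \<open>D \<subseteq> X\<close> by auto
  then have "poly_prec ?f ?g"
    using less agree unfolding poly_prec_def by (auto simp: le_less)
  moreover have "?f \<noteq> ?g" using less by auto
  ultimately show ?thesis by blast
qed

end
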